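(* (Injectivity of the surface-aligned representation.) For $\mathbf{x}\in\mathbb{R}^3\setminus\mathbb{I}$ define $\mathcal{X}(\mathbf{x})=(\mathbf{s}_c,h)\in\mathbb{R}^4$, where $\mathbf{s}$ is the dispersed projection of $\mathbf{x}$ onto the posed mesh $\mathcal{M}$, $h$ is the signed height ($h=\|\mathbf{x}-\mathbf{s}\|$ if $\mathbf{x}$ is outside the region enclosed by $\mathcal{M}$, $h=-\|\mathbf{x}-\mathbf{s}\|$ if inside), and $\mathbf{s}_c$ is the point of the T-pose mesh $\mathcal{M}_c$ with the same face and the same barycentric coordinates as $\mathbf{s}$. Then the map $\mathbf{x}\mapsto\mathcal{X}(\mathbf{x})$ is injective on $\mathbb{R}^3\setminus\mathbb{I}$.
   Context: Let $\mathcal{M}$ be a triangle mesh in $\mathbb{R}^3$ that is watertight (closed, without self-intersections) and has no faces of zero area. Each face $T=(\mathbf{v}_1,\mathbf{v}_2,\mathbf{v}_3)$ has an outward unit face normal $\mathbf{n}_T$; each vertex $\mathbf{v}$ has a unit vertex normal $\mathbf{n}_{\mathbf{v}}$, and for every face $T$ and every vertex $\mathbf{v}$ of $T$, $\langle \mathbf{n}_{\mathbf{v}},\mathbf{n}_T\rangle>0$. $\mathcal{M}_c$ is a second watertight triangle mesh without zero-area faces having the same combinatorial structure (same faces, vertex indexing) as $\mathcal{M}$ but different vertex positions; for $\mathbf{s}=\sum_i\alpha_i\mathbf{v}_i$ in face $T$ of $\mathcal{M}$, $\mathbf{s}_c=\sum_i\alpha_i\mathbf{v}^c_i$ in the corresponding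 face of $\mathcal{M}_c$. Vertex normal alignment of a face $T$ with orientation $\sigma\in\{+1,-1\}$: put $\mathbf{m}_T=\sigma\mathbf{n}_T$; for each $i\in\{1,2,3\}$ let $j,k$ be the other two indices, $\mathbf{e}_1=\mathbf{v}_j-\mathbf{v}_i$, $\mathbf{e}_2=\mathbf{v}_k-\mathbf{v}_i$, $\mathbf{m}_i=\sigma\mathbf{n}_{\mathbf{v}_i}$, write the in-plane part $\mathbf{m}_i-\langle\mathbf{m}_i,\mathbf{m}_T\rangle\mathbf{m}_T=c_1\mathbf{e}_1+c_2\mathbf{e}_2$, and define the aligned normal $\hat{\mathbf{n}}^{T,\sigma}_i=(\mathbf{m}_i-\max(0,c_1)\mathbf{e}_1-\max(0,c_2)\mathbf{e}_2)/\|\mathbf{m}_i-\max(0,c_1)\mathbf{e}_1-\max(0,c_2)\mathbf{e}_2\|$. (Aligned normals depend on the face $T$, not only on the vertex.) Barycentric interpolated projection onto $T$ with orientation $\sigma$: for $\mathbf{x}$ with $l:=\langle\mathbf{x}-\mathbf{v}_1,\sigma\mathbf{n}_T\rangle\ge 0$, set $\mathbf{v}_i'=\mathbf{v}_i+\big(l/\langle\hat{\mathbf{n}}^{T,\sigma}_i,\sigma\mathbf{n}_T\rangle\big)\hat{\mathbf{n}}^{T,\sigma}_i$, forming the parallel triangle $T'=(\mathbf{v}_1',\mathbf{v}_2',\mathbf{v}_3')$ in the plane through $\mathbf{x}$ parallel to $T$. If $\mathbf{x}\in T'$, i.e. $\mathbf{x}=\sum_i\alpha_i\mathbf{v}_i'$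 with $\alpha_i\ge0$, $\sum_i\alpha_i=1$, the projection is $\mathbf{s}_T=\sum_i\alpha_i\mathbf{v}_i$. Dispersed projection of $\mathbf{x}$ (with $\sigma=+1$ if $\mathbf{x}$ is outside the region enclosed by $\mathcal{M}$ and $\sigma=-1$ if inside): (1) compute the nearest point $\tilde{\mathbf{s}}$ of $\mathcal{M}$ to $\mathbf{x}$; (2) let $\mathcal{T}$ be the set of faces containing $\tilde{\mathbf{s}}$; (3) apply vertex normal alignment with orientation $\sigma$ to each $T\in\mathcal{T}$; (4) discard those $T$ with $\mathbf{x}\notin T'$; (5) compute $\mathbf{s}_T$ for the remaining $T$; (6) let $\mathbf{s}$ be the $\mathbf{s}_T$ nearest to $\mathbf{x}$. It is assumed that for every $\mathbf{x}\in\mathbb{R}^3$ at least one face survives step (4), so $\mathbf{s}$ is defined. Exceptional set: for a face $T$, orientation $\sigma$, and $\mathbf{a}^{T,\sigma}_i=\hat{\mathbf{n}}^{T,\sigma}_i/\langle\hat{\mathbf{n}}^{T,\sigma}_i,\sigma\mathbf{n}_T\rangle$, let $\mathbb{I}$ be the union over all faces $T$, both $\sigma$, and all pairs of distinct vertices $\mathbf{v}_i,\mathbf{v}_j$ of $T$ of the bilinear surfaces $\{(1-u)\mathbf{v}_i+u\mathbf{v}_j+t((1-u)\mathbf{a}^{T,\sigma}_i+u\mathbf{a}^{T,\sigma}_j): u\in[0,1],t\ge0\}$ (a set of Lebesgue measure zero). For $\mathbf{x}\notin\mathbb{I}$, the dispersed projection $\mathbf{s}$ lies in the relative interior of a face.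 *)

theory Defs
  imports "HOL-Analysis.Analysis" "HOL-Analysis.Cross3"
begin

text \<open>A triangle mesh is given by a vertex position map V :: nat => real^3
 and a set F of faces; a face is an ordered (oriented) triple of vertex indices.
 The posed mesh M is (V, F), the T-pose mesh M_c is (Vc, F) (same combinatorics).\<close>

type_synonym face = "nat \<times> nat \<times> nat"

fun fidx :: "face \<Rightarrow> nat \<Rightarrow> nat" where
  "fidx (a, b, c) i = (if i = 0 then a else if i = 1 then b else c)"

definition fverts :: "face \<Rightarrow> nat set" where
  "fverts T = {fidx T 0, fidx T 1, fidx T 2}"

definition mverts :: "face set \<Rightarrow> nat set" where
  "mverts F = (\<Union>T\<in>F. fverts T)"

definition dedges :: "face \<Rightarrow> (nat \<times> nat) set" where
  "dedges T = {(fidx T 0, fidx T 1), (fidx T 1, fidx T 2), (fidx T 2, fidx T 0)}"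

definition tri :: "(nat \<Rightarrow> real^3) \<Rightarrow> face \<Rightarrow> (real^3) set" where
  "tri V T = convex hull {V (fidx T 0), V (fidx T 1), V (fidx T 2)}"

definition surface :: "(nat \<Rightarrow> real^3) \<Rightarrow> face set \<Rightarrow> (real^3) set" where
  "surface V F = (\<Union>T\<in>F. tri V T)"

definition fnormal :: "(nat \<Rightarrow> real^3) \<Rightarrow> face \<Rightarrow> real^3" where
  "fnormal V T = (let n = cross3 (V (fidx T 1) - V (fidx T 0)) (V (fidx T 2) - V (fidx T 0))
                  in (1 / norm n) *\<^sub>R n)"

definition watertight :: "(nat \<Rightarrow> real^3) \<Rightarrow> face set \<Rightarrow> bool" where
  "watertight V F \<longleftrightarrow>
     finite F \<and> F \<noteq> {} \<and>
     inj_on V (mverts F) \<and>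
     (\<forall>T\<in>F. card (fverts T) = 3) \<and>
     \<comment> \<open>no faces of zero area\<close>
     (\<forall>T\<in>F. cross3 (V (fidx T 1) - V (fidx T 0)) (V (fidx T 2) - V (fidx T 0)) \<noteq> 0) \<and>
     \<comment> \<open>closed and consistently oriented: every directed edge is matched by exactly one
        face containing the reversed edge, and no directed edge lies in two faces\<close>
     (\<forall>T\<in>F. \<forall>(p, q)\<in>dedges T. \<exists>!T'. T' \<in> F \<and> (q, p) \<in> dedges T') \<and>
     (\<forall>T\<in>F. \<forall>T'\<in>F. T \<noteq> T' \<longrightarrow> dedges T \<inter> dedges T' = {}) \<and>
     \<comment> \<open>no self-intersections: distinct faces meet only in the convex hull of their
        common vertices\<close>
     (\<forall>T\<in>F. \<forall>T'\<in>F. T \<noteq> T' \<longrightarrow>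
        tri V T \<inter> tri V T' = convex hull (V ` (fverts T \<inter> fverts T')))"

text \<open>The face normals point outward: into the unbounded complementary region
  (library notion outside; the region enclosed by the mesh is the library notion inside).\<close>
definition outward_normals :: "(nat \<Rightarrow> real^3) \<Rightarrow> face set \<Rightarrow> bool" where
  "outward_normals V F \<longleftrightarrow>
     (\<forall>T\<in>F. \<forall>p\<in>rel_interior (tri V T). \<exists>e>0. \<forall>t. 0 < t \<and> t < e \<longrightarrow>
        p + t *\<^sub>R fnormal V T \<in> outside (surface V F))"

definition vertex_normals_ok :: "(nat \<Rightarrow> real^3) \<Rightarrow> face set \<Rightarrow> (nat \<Rightarrow> real^3) \<Rightarrow> bool" where
  "vertex_normals_ok V F N \<longleftrightarrow>
     (\<forall>v\<in>mverts F. norm (N v) = 1) \<and>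
     (\<forall>T\<in>F. \<forall>i<3. inner (N (fidx T i)) (fnormal V T) > 0)"

definition orient :: "(nat \<Rightarrow> real^3) \<Rightarrow> face set \<Rightarrow> real^3 \<Rightarrow> real" where
  "orient V F x = (if x \<in> inside (surface V F) then -1 else 1)"

definition aligned_normal ::
  "(nat \<Rightarrow> real^3) \<Rightarrow> (nat \<Rightarrow> real^3) \<Rightarrow> face \<Rightarrow> real \<Rightarrow> nat \<Rightarrow> real^3" where
  "aligned_normal V N T \<sigma> i =
     (let vi = V (fidx T i); vj = V (fidx T ((i + 1) mod 3)); vk = V (fidx T ((i + 2) mod 3));
          mT = \<sigma> *\<^sub>R fnormal V T; e1 = vj - vi; e2 = vk - vi;
          m = \<sigma> *\<^sub>R N (fidx T i);
          w = m - inner m mT *\<^sub>R mT;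
          c = (THE c :: real \<times> real. w = fst c *\<^sub>R e1 + snd c *\<^sub>R e2);
          u = m - max 0 (fst c) *\<^sub>R e1 - max 0 (snd c) *\<^sub>R e2
      in (1 / norm u) *\<^sub>R u)"

definition avec :: "(nat \<Rightarrow> real^3) \<Rightarrow> (nat \<Rightarrow> real^3) \<Rightarrow> face \<Rightarrow> real \<Rightarrow> nat \<Rightarrow> real^3" where
  "avec V N T \<sigma> i =
     (1 / inner (aligned_normal V N T \<sigma> i) (\<sigma> *\<^sub>R fnormal V T)) *\<^sub>R aligned_normal V N T \<sigma> i"

definition lheight :: "(nat \<Rightarrow> real^3) \<Rightarrow> face \<Rightarrow> real \<Rightarrow> real^3 \<Rightarrow> real" where
  "lheight V T \<sigma> x = inner (x - V (fidx T 0)) (\<sigma> *\<^sub>R fnormal V T)"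

text \<open>Vertices of the parallel triangle T' through x.\<close>
definition pvert :: "(nat \<Rightarrow> real^3) \<Rightarrow> (nat \<Rightarrow> real^3) \<Rightarrow> face \<Rightarrow> real \<Rightarrow> real^3 \<Rightarrow> nat \<Rightarrow> real^3" where
  "pvert V N T \<sigma> x i =
     V (fidx T i) + (lheight V T \<sigma> x / inner (aligned_normal V N T \<sigma> i) (\<sigma> *\<^sub>R fnormal V T))
                      *\<^sub>R aligned_normal V N T \<sigma> i"

definition bary :: "(nat \<Rightarrow> real) \<Rightarrow> bool" where
  "bary \<alpha> \<longleftrightarrow> \<alpha> 0 \<ge> 0 \<and> \<alpha> 1 \<ge> 0 \<and> \<alpha> 2 \<ge> 0 \<and> \<alpha> 0 + \<alpha> 1 + \<alpha> 2 = 1"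

definition bpoint :: "(nat \<Rightarrow> real^3) \<Rightarrow> face \<Rightarrow> (nat \<Rightarrow> real) \<Rightarrow> real^3" where
  "bpoint V T \<alpha> = \<alpha> 0 *\<^sub>R V (fidx T 0) + \<alpha> 1 *\<^sub>R V (fidx T 1) + \<alpha> 2 *\<^sub>R V (fidx T 2)"

text \<open>x lies in the parallel triangle T' with barycentric coordinates \<alpha> (requires l \<ge> 0);
  the barycentric interpolated projection is then bpoint V T \<alpha>.\<close>
definition in_parallel ::
  "(nat \<Rightarrow> real^3) \<Rightarrow> (nat \<Rightarrow> real^3) \<Rightarrow> face \<Rightarrow> real \<Rightarrow> real^3 \<Rightarrow> (nat \<Rightarrow> real) \<Rightarrow> bool" where
  "in_parallel V N T \<sigma> x \<alpha> \<longleftrightarrow>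
     lheight V T \<sigma> x \<ge> 0 \<and> bary \<alpha> \<and>
     x = \<alpha> 0 *\<^sub>R pvert V N T \<sigma> x 0 + \<alpha> 1 *\<^sub>R pvert V N T \<sigma> x 1 + \<alpha> 2 *\<^sub>R pvert V N T \<sigma> x 2"

definition nearest_point :: "(real^3) set \<Rightarrow> real^3 \<Rightarrow> real^3 \<Rightarrow> bool" where
  "nearest_point S x p \<longleftrightarrow> p \<in> S \<and> (\<forall>q\<in>S. dist x p \<le> dist x q)"

text \<open>Dispersed projection (as a relation, allowing any admissible choice in case of ties):
  the output is the face T and barycentric coordinates \<alpha>, i.e. s = bpoint V T \<alpha>.\<close>
definition dispersed_proj ::
  "(nat \<Rightarrow> real^3) \<Rightarrow> face set \<Rightarrow> (nat \<Rightarrow> real^3) \<Rightarrow> real^3 \<Rightarrow> face \<Rightarrow> (nat \<Rightarrow> real) \<Rightarrow> bool" where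
  "dispersed_proj V F N x T \<alpha> \<longleftrightarrow>
     (let \<sigma> = orient V F x in
      \<exists>st. nearest_point (surface V F) x st \<and>
        T \<in> F \<and> st \<in> tri V T \<and> in_parallel V N T \<sigma> x \<alpha> \<and>
        (\<forall>T'\<in>F. \<forall>\<beta>. st \<in> tri V T' \<and> in_parallel V N T' \<sigma> x \<beta> \<longrightarrow>
            dist x (bpoint V T \<alpha>) \<le> dist x (bpoint V T' \<beta>)))"

definition exceptional :: "(nat \<Rightarrow> real^3) \<Rightarrow> face set \<Rightarrow> (nat \<Rightarrow> real^3) \<Rightarrow> (real^3) set" where
  "exceptional V F N =
     (\<Union>T\<in>F. \<Union>\<sigma>\<in>{1, -1}. \<Union>i\<in>{0,1,2::nat}. \<Union>j\<in>{0,1,2::nat} - {i}.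
        {(1 - u) *\<^sub>R V (fidx T i) + u *\<^sub>R V (fidx T j)
           + t *\<^sub>R ((1 - u) *\<^sub>R avec V N T \<sigma> i + u *\<^sub>R avec V N T \<sigma> j) | u t.
         0 \<le> u \<and> u \<le> 1 \<and> 0 \<le> t})"

definition sa_rep ::
  "(nat \<Rightarrow> real^3) \<Rightarrow> (nat \<Rightarrow> real^3) \<Rightarrow> face set \<Rightarrow> real^3 \<Rightarrow> face \<Rightarrow> (nat \<Rightarrow> real) \<Rightarrow> (real^3) \<times> real" where
  "sa_rep V Vc F x T \<alpha> =
     (bpoint Vc T \<alpha>,
      (if x \<in> inside (surface V F) then - norm (x - bpoint V T \<alpha>) else norm (x - bpoint V T \<alpha>)))"

end

theory Submission
  imports Defs
begin

text \<open>
  If a barycentric coordinate of x in its parallel triangle vanished, x would lie on one of the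
  bilinear surfaces making up the exceptional set; so off that set the dispersed projection s lies
  in the relative interior of its face T. Distinct faces of the watertight mesh \<open>M\<^sub>c\<close> meet only in
  common vertices, and two distinct faces with the same vertices would be oppositely oriented,
  which the vertex normals forbid; hence \<open>s\<^sub>c\<close> determines T and the barycentric coordinates of s.
  Finally \<open>x = s + l \<Sum>\<^sub>i \<alpha>\<^sub>i a\<^sub>i\<close> with the height \<open>l \<ge> 0\<close>, so x lies on a ray from s fixed by T, the
  coordinates and the orientation: the signed height fixes the orientation (or forces x = s) and
  the distance \<open>|x - s|\<close> fixes the point on the ray.
\<close>

lemma watertightD:
  assumes "watertight V F" "T \<in> F"
  shows watertight_card_fverts: "card (fverts T) = 3"
    and watertight_cross_nonzero:
      "cross3 (V (fidx T 1) - V (fidx T 0)) (V (fidx T 2) - V (fidx T 0)) \<noteq> 0"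
    and watertight_dedges_disjoint: "T' \<in> F \<Longrightarrow> T \<noteq> T' \<Longrightarrow> dedges T \<inter> dedges T' = {}"
    and watertight_tri_inter:
      "T' \<in> F \<Longrightarrow> T \<noteq> T' \<Longrightarrow> tri V T \<inter> tri V T' = convex hull (V ` (fverts T \<inter> fverts T'))"
proof -
  note wt = assms(1)[unfolded watertight_def]
  show "card (fverts T) = 3" using wt assms(2) by (elim conjE) simp
  show "cross3 (V (fidx T 1) - V (fidx T 0)) (V (fidx T 2) - V (fidx T 0)) \<noteq> 0"
    using wt assms(2) by (elim conjE) simp
  show "T' \<in> F \<Longrightarrow> T \<noteq> T' \<Longrightarrow> dedges T \<inter> dedges T' = {}"
    using wt assms(2) by (elim conjE) simp
  show "T' \<in> F \<Longrightarrow> T \<noteq> T' \<Longrightarrow> tri V T \<inter> tri V T' = convex hull (V ` (fverts T \<inter> fverts T'))"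
    using wt assms(2) by (elim conjE) simp
qed

lemma cross3_diff_expand:
  fixes A B C :: "real^3"
  shows "cross3 (B - A) (C - A) = cross3 A B + cross3 B C + cross3 C A"
  by (simp add: Cross3.left_diff_distrib Cross3.right_diff_distrib cross_skew[of C A] cross_skew[of A B])

lemma fnormal_reverse:
  assumes "T' \<in> {(a, c, b), (b, a, c), (c, b, a)}"
  shows "fnormal V T' = - fnormal V (a, b, c)"
proof -
  have "cross3 (V (fidx T' 1) - V (fidx T' 0)) (V (fidx T' 2) - V (fidx T' 0))
      = - cross3 (V b - V a) (V c - V a)"
    using assms unfolding cross3_diff_expand
    by (auto simp: cross_skew[of "V b" "V a"] cross_skew[of "V c" "V b"] cross_skew[of "V a" "V c"])
  then show ?thesis by (simp add: fnormal_def Let_def)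
qed

lemma same_fverts_reversed:
  assumes w: "watertight V F" and TF: "T \<in> F" "T' \<in> F" and ne: "T \<noteq> T'"
    and fv: "fverts T = fverts T'" and T: "T = (a, b, c)"
  shows "T' \<in> {(a, c, b), (b, a, c), (c, b, a)}"
proof -
  obtain a' b' c' where T': "T' = (a', b', c')" by (cases T') auto
  have "card {a, b, c} = 3" "card {a', b', c'} = 3"
    using watertight_card_fverts[OF w TF(1)] watertight_card_fverts[OF w TF(2)]
    by (simp_all add: T T' fverts_def)
  then have d: "a \<noteq> b" "a \<noteq> c" "b \<noteq> c" "a' \<noteq> b'" "a' \<noteq> c'" "b' \<noteq> c'"
    by (auto simp: card_insert_if split: if_splits)
  have mem: "a' \<in> {a, b, c}" "b' \<in> {a, b, c}" "c' \<in> {a, b, c}"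
    using fv by (simp_all add: T T' fverts_def)
  \<comment> \<open>the two cyclic rotations of T would share the directed edge (a, b) with T\<close>
  have "(a, b) \<in> dedges T" by (simp add: T dedges_def)
  then have "(a, b) \<notin> dedges T'" using watertight_dedges_disjoint[OF w TF ne] by blast
  then have "T' \<noteq> (b, c, a)" "T' \<noteq> (c, a, b)" by (auto simp: dedges_def)
  then show ?thesis using mem d ne by (auto simp: T T')
qed

lemma faces_eq_if_fverts_eq:
  assumes w: "watertight V F" and vn: "vertex_normals_ok V F N"
    and TF: "T \<in> F" "T' \<in> F" and fv: "fverts T = fverts T'"
  shows "T = T'"
proof (rule ccontr)
  assume ne: "T \<noteq> T'"
  obtain a b c where T: "T = (a, b, c)" by (cases T) auto
  have opp: "fnormal V T' = - fnormal V T"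
    using fnormal_reverse[OF same_fverts_reversed[OF w TF ne fv T]] by (simp add: T)
  have "a \<in> fverts T'" unfolding fv[symmetric] by (simp add: T fverts_def)
  then obtain j where j: "j \<in> {0, 1, 2}" "fidx T' j = a" by (auto simp: fverts_def)
  have "inner (N a) (fnormal V T) > 0"
    using vn TF(1) unfolding vertex_normals_ok_def by (metis T fidx.simps zero_less_numeral)
  moreover have "inner (N a) (fnormal V T') > 0"
    using vn TF(2) j unfolding vertex_normals_ok_def by auto
  ultimately show False using opp by simp
qed

lemma affine_coords_unique:
  fixes A B C :: "real^3"
  assumes nz: "cross3 (B - A) (C - A) \<noteq> 0" and sum: "a0 + a1 + a2 = b0 + b1 + b2"
    and eq: "a0 *\<^sub>R A + a1 *\<^sub>R B + a2 *\<^sub>R C = b0 *\<^sub>R A + b1 *\<^sub>R B + b2 *\<^sub>R C"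
  shows "a0 = b0 \<and> a1 = b1 \<and> a2 = b2"
proof -
  have a0: "a0 - b0 = - ((a1 - b1) + (a2 - b2))" using sum by simp
  have "(a0 - b0) *\<^sub>R A + (a1 - b1) *\<^sub>R B + (a2 - b2) *\<^sub>R C = 0"
    using eq by (simp add: algebra_simps)
  then have z: "(a1 - b1) *\<^sub>R (B - A) + (a2 - b2) *\<^sub>R (C - A) = 0"
    unfolding a0 by (simp add: algebra_simps)
  have "(a1 - b1) *\<^sub>R cross3 (B - A) (C - A) = 0"
    using arg_cong[OF z, of "\<lambda>v. cross3 v (C - A)"] by (simp add: cross_add_left cross_mult_left)
  moreover have "(a2 - b2) *\<^sub>R cross3 (B - A) (C - A) = 0"
    using arg_cong[OF z, of "cross3 (B - A)"] by (simp add: cross_add_right cross_mult_right)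
  ultimately show ?thesis using nz sum by simp
qed

lemma bpoint_in_tri: "bary \<alpha> \<Longrightarrow> bpoint V T \<alpha> \<in> tri V T"
  unfolding tri_def convex_hull_3 bpoint_def bary_def by fastforce

lemma bpoint_coords_unique:
  assumes "cross3 (W (fidx T 1) - W (fidx T 0)) (W (fidx T 2) - W (fidx T 0)) \<noteq> 0"
    and "bary \<alpha>" "bary \<beta>" "bpoint W T \<alpha> = bpoint W T \<beta>"
  shows "\<alpha> 0 = \<beta> 0 \<and> \<alpha> 1 = \<beta> 1 \<and> \<alpha> 2 = \<beta> 2"
proof (rule affine_coords_unique[OF assms(1)])
  show "\<alpha> 0 + \<alpha> 1 + \<alpha> 2 = \<beta> 0 + \<beta> 1 + \<beta> 2" using assms(2,3) by (simp add: bary_def)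
  show "\<alpha> 0 *\<^sub>R W (fidx T 0) + \<alpha> 1 *\<^sub>R W (fidx T 1) + \<alpha> 2 *\<^sub>R W (fidx T 2)
      = \<beta> 0 *\<^sub>R W (fidx T 0) + \<beta> 1 *\<^sub>R W (fidx T 1) + \<beta> 2 *\<^sub>R W (fidx T 2)"
    using assms(4) by (simp only: bpoint_def)
qed

lemma face_eq_if_interior_bpoint_eq:
  assumes w: "watertight V F" and vn: "vertex_normals_ok V F N" and wc: "watertight W F"
    and TF: "T \<in> F" "T' \<in> F" and ba: "bary \<alpha>" "\<alpha> 0 > 0" "\<alpha> 1 > 0" "\<alpha> 2 > 0"
    and bb: "bary \<beta>" and eq: "bpoint W T \<alpha> = bpoint W T' \<beta>"
  shows "T' = T"
proof (rule ccontr)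
  assume ne: "T' \<noteq> T"
  let ?p = "bpoint W T \<alpha>"
  define C where "C = fverts T \<inter> fverts T'"
  have "?p \<in> tri W T" by (rule bpoint_in_tri[OF ba(1)])
  moreover have "?p \<in> tri W T'" unfolding eq by (rule bpoint_in_tri[OF bb])
  ultimately have pC: "?p \<in> convex hull (W ` C)"
    using watertight_tri_inter[OF wc TF ne[symmetric]] unfolding C_def by blast
  have "C \<noteq> fverts T"
  proof
    assume "C = fverts T"
    then have "fverts T = fverts T'"
      using watertight_card_fverts[OF w TF(1)] watertight_card_fverts[OF w TF(2)]
      by (intro card_subset_eq) (auto simp: C_def fverts_def)
    then show False using faces_eq_if_fverts_eq[OF w vn TF] ne by simp
  qed
  then have "C \<subseteq> {fidx T 1, fidx T 2} \<or> C \<subseteq> {fidx T 0, fidx T 2} \<or> C \<subseteq> {fidx T 0, fidx T 1}"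
    by (auto simp: C_def fverts_def)
  then obtain i j k :: nat where ijk: "(i, j, k) \<in> {(1, 2, 0), (0, 2, 1), (0, 1, 2)}"
    and Cij: "C \<subseteq> {fidx T i, fidx T j}"
    by auto
  have "convex hull (W ` C) \<subseteq> closed_segment (W (fidx T i)) (W (fidx T j))"
    unfolding segment_convex_hull by (rule hull_mono) (use Cij in auto)
  then have "?p \<in> closed_segment (W (fidx T i)) (W (fidx T j))" using pC by blast
  then obtain u where u: "0 \<le> u" "u \<le> 1" "?p = (1 - u) *\<^sub>R W (fidx T i) + u *\<^sub>R W (fidx T j)"
    unfolding in_segment by blast
  define \<gamma> where "\<gamma> m = (if m = i then 1 - u else if m = j then u else 0)" for m
  have "bary \<gamma>" "?p = bpoint W T \<gamma>"
    using ijk u by (auto simp: \<gamma>_def bary_def bpoint_def eval_nat_numeral)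
  then have "\<alpha> k = \<gamma> k"
    using bpoint_coords_unique[OF watertight_cross_nonzero[OF wc TF(1)] ba(1)] ijk
    by (auto simp: eval_nat_numeral)
  then show False using ba ijk by (auto simp: \<gamma>_def eval_nat_numeral)
qed

definition interp_avec ::
  "(nat \<Rightarrow> real^3) \<Rightarrow> (nat \<Rightarrow> real^3) \<Rightarrow> face \<Rightarrow> real \<Rightarrow> (nat \<Rightarrow> real) \<Rightarrow> real^3" where
  "interp_avec V N T \<sigma> \<alpha> = \<alpha> 0 *\<^sub>R avec V N T \<sigma> 0 + \<alpha> 1 *\<^sub>R avec V N T \<sigma> 1 + \<alpha> 2 *\<^sub>R avec V N T \<sigma> 2"

lemma in_parallel_decomp:
  assumes "in_parallel V N T \<sigma> x \<alpha>"
  shows "x = bpoint V T \<alpha> + lheight V T \<sigma> x *\<^sub>R interp_avec V N T \<sigma> \<alpha>"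
proof -
  have "pvert V N T \<sigma> x i = V (fidx T i) + lheight V T \<sigma> x *\<^sub>R avec V N T \<sigma> i" for i
    by (simp add: pvert_def avec_def)
  then show ?thesis
    using assms by (simp add: in_parallel_def bpoint_def interp_avec_def algebra_simps)
qed

lemma exceptionalI:
  assumes "T \<in> F" "\<sigma> \<in> {1, -1}" "i < 3" "j < 3" "i \<noteq> j" "0 \<le> u" "u \<le> 1" "0 \<le> t"
  shows "(1 - u) *\<^sub>R V (fidx T i) + u *\<^sub>R V (fidx T j)
           + t *\<^sub>R ((1 - u) *\<^sub>R avec V N T \<sigma> i + u *\<^sub>R avec V N T \<sigma> j) \<in> exceptional V F N"
proof -
  have i: "i \<in> {0, 1, 2}" and j: "j \<in> {0, 1, 2} - {i}" using assms(3-5) by auto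
  show ?thesis
    unfolding exceptional_def
    by (rule UN_I[OF assms(1)], rule UN_I[OF assms(2)], rule UN_I[OF i], rule UN_I[OF j])
      (use assms(6-8) in blast)
qed

lemma in_parallel_coords_pos:
  assumes par: "in_parallel V N T \<sigma> x \<alpha>" and "T \<in> F" "\<sigma> \<in> {1, -1}"
    and "x \<notin> exceptional V F N"
  shows "\<alpha> 0 > 0 \<and> \<alpha> 1 > 0 \<and> \<alpha> 2 > 0"
proof -
  let ?l = "lheight V T \<sigma> x" and ?a = "avec V N T \<sigma>" and ?v = "\<lambda>i. V (fidx T i)"
  have l: "?l \<ge> 0" and b: "bary \<alpha>" using par by (simp_all add: in_parallel_def)
  have x: "x = bpoint V T \<alpha> + ?l *\<^sub>R interp_avec V N T \<sigma> \<alpha>"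
    using par by (rule in_parallel_decomp)
  have on_edge: "x \<in> exceptional V F N"
    if "i < 3" "j < 3" "i \<noteq> j" "k < 3" "k \<noteq> i" "k \<noteq> j" "\<alpha> k = 0" for i j k
  proof -
    have "x = \<alpha> i *\<^sub>R ?v i + \<alpha> j *\<^sub>R ?v j + ?l *\<^sub>R (\<alpha> i *\<^sub>R ?a i + \<alpha> j *\<^sub>R ?a j)"
      using that x by (auto simp: bpoint_def interp_avec_def eval_nat_numeral less_Suc_eq algebra_simps)
    moreover have "\<alpha> i = 1 - \<alpha> j"
      using that b by (auto simp: bary_def eval_nat_numeral less_Suc_eq)
    ultimately show ?thesis
      using exceptionalI[OF assms(2,3) that(1-3), of "\<alpha> j" ?l V N] that b l
      by (auto simp: bary_def eval_nat_numeral less_Suc_eq)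
  qed
  have "\<alpha> 0 \<noteq> 0" using on_edge[of 1 2 0] assms(4) by auto
  moreover have "\<alpha> 1 \<noteq> 0" using on_edge[of 0 2 1] assms(4) by auto
  moreover have "\<alpha> 2 \<noteq> 0" using on_edge[of 0 1 2] assms(4) by auto
  ultimately show ?thesis using b by (auto simp: bary_def)
qed

lemma in_parallel_eq_if_offset_norm_eq:
  assumes px: "in_parallel V N T \<sigma> x \<alpha>" and py: "in_parallel V N T \<sigma> y \<alpha>"
    and nn: "norm (x - bpoint V T \<alpha>) = norm (y - bpoint V T \<alpha>)"
  shows "x = y"
proof -
  let ?s = "bpoint V T \<alpha>" and ?w = "interp_avec V N T \<sigma> \<alpha>"
  let ?lx = "lheight V T \<sigma> x" and ?ly = "lheight V T \<sigma> y"
  have x: "x = ?s + ?lx *\<^sub>R ?w" and y: "y = ?s + ?ly *\<^sub>R ?w"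
    using px py by (simp_all add: in_parallel_decomp[symmetric])
  have "?lx \<ge> 0" "?ly \<ge> 0" using px py by (simp_all add: in_parallel_def)
  then have "?lx * norm ?w = ?ly * norm ?w"
    using nn by (subst (asm) (1 2) x y) simp
  then have "?lx = ?ly \<or> ?w = 0" by auto
  then show ?thesis using x y by auto
qed

lemma in_parallel_eq_if_signed_height_eq:
  assumes px: "in_parallel V N T (orient V F x) x \<alpha>" and py: "in_parallel V N T (orient V F y) y \<alpha>"
    and h: "snd (sa_rep V Vc F x T \<alpha>) = snd (sa_rep V Vc F y T \<alpha>)"
  shows "x = y"
proof (cases "x \<in> inside (surface V F) \<longleftrightarrow> y \<in> inside (surface V F)")
  case True
  then have "orient V F y = orient V F x" by (simp add: orient_def)
  then show ?thesis
    using in_parallel_eq_if_offset_norm_eq[OF px] py h True by (auto simp: sa_rep_def split: if_splits)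
next
  case False
  then have "norm (x - bpoint V T \<alpha>) + norm (y - bpoint V T \<alpha>) = 0"
    using h by (auto simp: sa_rep_def split: if_splits)
  then show ?thesis by (simp add: add_nonneg_eq_0_iff)
qed

theorem mainTheorem4:
  fixes V Vc N :: "nat \<Rightarrow> real^3" and F :: "face set"
  assumes "watertight V F"
    and "outward_normals V F"
    and "vertex_normals_ok V F N"
    and "watertight Vc F"
    and "\<forall>x st. nearest_point (surface V F) x st \<longrightarrow>
           (\<exists>T\<in>F. \<exists>\<alpha>. st \<in> tri V T \<and> in_parallel V N T (orient V F x) x \<alpha>)"
    and "x \<notin> exceptional V F N" and "y \<notin> exceptional V F N"
    and "dispersed_proj V F N x T \<alpha>" and "dispersed_proj V F N y T' \<beta>"
    and "sa_rep V Vc F x T \<alpha> = sa_rep V Vc F y T' \<beta>"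
  shows "x = y"
proof -
  have TF: "T \<in> F" "T' \<in> F" and px: "in_parallel V N T (orient V F x) x \<alpha>"
    and py: "in_parallel V N T' (orient V F y) y \<beta>"
    using assms(8,9) unfolding dispersed_proj_def Let_def by blast+
  have ba: "bary \<alpha>" and bb: "bary \<beta>" using px py by (simp_all add: in_parallel_def)
  have pos: "\<alpha> 0 > 0 \<and> \<alpha> 1 > 0 \<and> \<alpha> 2 > 0"
    using in_parallel_coords_pos[OF px TF(1) _ assms(6)] by (simp add: orient_def)
  have sc: "bpoint Vc T \<alpha> = bpoint Vc T' \<beta>" using assms(10) by (simp add: sa_rep_def)
  have "T' = T" using face_eq_if_interior_bpoint_eq[OF assms(1,3,4) TF ba _ _ _ bb sc] pos by blast
  moreover have "\<alpha> 0 = \<beta> 0 \<and> \<alpha> 1 = \<beta> 1 \<and> \<alpha> 2 = \<beta> 2"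
    using bpoint_coords_unique[OF watertight_cross_nonzero[OF assms(4) TF(1)] ba bb] sc calculation
    by simp
  ultimately have py': "in_parallel V N T (orient V F y) y \<alpha>"
    and "sa_rep V Vc F y T' \<beta> = sa_rep V Vc F y T \<alpha>"
    using py by (simp_all add: in_parallel_def bary_def bpoint_def sa_rep_def)
  with assms(10) have "snd (sa_rep V Vc F x T \<alpha>) = snd (sa_rep V Vc F y T \<alpha>)" by simp
  then show ?thesis by (rule in_parallel_eq_if_signed_height_eq[OF px py'])
qed

end
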